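(* If $(\mathbb T,\zeta,v,\sigma)$ is a vertex of the Yang–Baxter graph $G_\lambda^{q,s}$, then $\sigma=r_v$ and $\zeta[i]=q^{v[i]}s^{\mathrm{CT}_{\mathbb T}[\sigma[i]]}$ for $1\leq i\leq N$. (This $\zeta$ is denoted $\zeta_{v,\mathbb T}$.)
   Context: Let $\lambda$ be a partition of $N$. A reverse standard tableau (RST) of shape $\lambda$ is a filling of $\lambda$ with $1,\dots,N$ strictly decreasing along rows and columns; $\mathrm{Tab}_\lambda$ is the set of them. For an RST $\mathbb T$, $\mathrm{CT}_{\mathbb T}[i]=\mathrm{COL}_{\mathbb T}[i]-\mathrm{ROW}_{\mathbb T}[i]$ is the content of the cell containing $i$. For $v\in\mathbb N^N$, the rank function is $r_v[i]=\#\{j\leq i: v[j]\geq v[i]\}+\#\{j>i: v[j]>v[i]\}$, viewed as a permutation. The graph $G_\lambda^{q,s}$ has vertices labeled by 4-tuples $(\mathbb T,\zeta,v,\sigma)$ with $\mathbb T$ an RST, $\zeta$ a vector of length $N$, $v\in\mathbb N^N$, $\sigma\in\mathfrak S_N$. Its root is $(\mathbb T_\lambda,\mathrm{CT}^s_{\mathbb T_\lambda},[0^N],[1,\dots,N])$, where $\mathbb T_\lambda$ is the tableau obtained by filling $\lambda$ from bottom to top and left to right with $1,\dots,N$ in decreasing order and $\mathrm{CT}^s_{\mathbb T}[i]=s^{\mathrm{CT}_{\mathbb T}[i]}$. Transpositions act by $(\mathbb T,\zeta,v,\sigma)s_i=(\mathbb T,\zeta s_i,vs_i,\sigma s_i)$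 if $v[i]\neq v[i+1]$; $=(\mathbb T^{(\sigma[i],\sigma[i+1])},\zeta s_i,v,\sigma)$ if $v[i]=v[i+1]$ and $\mathbb T^{(\sigma[i],\sigma[i+1])}$ (entries $\sigma[i],\sigma[i+1]$ swapped) is an RST; and $=(\mathbb T,\zeta,v,\sigma)$ otherwise. The affine action is $(\mathbb T,\zeta,v,\sigma)\Psi=(\mathbb T,[\zeta[2],\dots,\zeta[N],q\zeta[1]],[v[2],\dots,v[N],v[1]+1],[\sigma_2,\dots,\sigma_N,\sigma_1])$. The vertices of $G_\lambda^{q,s}$ are obtained from the root by adding an arrow $s_i$ to the image under $s_i$ when $v[i]<v[i+1]$, or when $v[i]=v[i+1]$ and the new tableau is obtained by interchanging two integers $k<\ell$ with $\mathrm{CT}_{\mathbb T}(k)\geq\mathrm{CT}_{\mathbb T}(\ell)+2$; and adding an arrow $\Psi$ to the image under $\Psi$ (arrows $s_i$ that fix the vertex go to $\emptyset$). *)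

theory Defs
  imports Main
begin

(* Partitions: list of positive parts, weakly decreasing, summing to N. Rows/columns are 0-indexed. *)
definition is_partition :: "nat list \<Rightarrow> nat \<Rightarrow> bool" where
  "is_partition lam N \<longleftrightarrow> sorted_wrt (\<ge>) lam \<and> (\<forall>p\<in>set lam. 0 < p) \<and> sum_list lam = N"

definition cells :: "nat list \<Rightarrow> (nat \<times> nat) set" where
  "cells lam = {(r, c). r < length lam \<and> c < lam ! r}"

(* A tableau is a filling T r c of the cells; outside the shape the value is 0 (canonical form). *)
type_synonym tableau = "nat \<Rightarrow> nat \<Rightarrow> nat"

definition is_RST :: "nat list \<Rightarrow> nat \<Rightarrow> tableau \<Rightarrow> bool" where
  "is_RST lam N T \<longleftrightarrow>
     bij_betw (\<lambda>(r, c). T r c) (cells lam) {1..N} \<and>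
     (\<forall>r c. (r, c) \<notin> cells lam \<longrightarrow> T r c = 0) \<and>
     (\<forall>r c. (r, Suc c) \<in> cells lam \<longrightarrow> T r c > T r (Suc c)) \<and>
     (\<forall>r c. (Suc r, c) \<in> cells lam \<longrightarrow> T r c > T (Suc r) c)"

definition cell_of :: "nat list \<Rightarrow> tableau \<Rightarrow> nat \<Rightarrow> nat \<times> nat" where
  "cell_of lam T i = (THE rc. rc \<in> cells lam \<and> T (fst rc) (snd rc) = i)"

definition CT :: "nat list \<Rightarrow> tableau \<Rightarrow> nat \<Rightarrow> int" where
  "CT lam T i = int (snd (cell_of lam T i)) - int (fst (cell_of lam T i))"

(* T_lambda: rows filled from bottom to top with 1..N, decreasing left to right in each row *)
definition T_lam :: "nat list \<Rightarrow> nat \<Rightarrow> tableau" where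
  "T_lam lam N = (\<lambda>r c. if (r, c) \<in> cells lam then N - sum_list (take r lam) - c else 0)"

definition swapT :: "tableau \<Rightarrow> nat \<Rightarrow> nat \<Rightarrow> tableau" where
  "swapT T a b = (\<lambda>r c. if T r c = a then b else if T r c = b then a else T r c)"

(* rank function r_v, positions 0-based in the list (position i+1 in the paper) *)
definition rank :: "nat list \<Rightarrow> nat list" where
  "rank v = map (\<lambda>i. card {j. j \<le> i \<and> j < length v \<and> v ! j \<ge> v ! i}
                      + card {j. i < j \<and> j < length v \<and> v ! j > v ! i}) [0..<length v]"

(* adjacent swap at 0-based positions k, k+1 (the transposition s_{k+1}) *)
definition swapL :: "'b list \<Rightarrow> nat \<Rightarrow> 'b list" where
  "swapL xs k = xs[k := xs ! Suc k, Suc k := xs ! k]"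

definition rot_q :: "'a::field \<Rightarrow> 'a list \<Rightarrow> 'a list" where
  "rot_q q z = (case z of [] \<Rightarrow> [] | a # zs \<Rightarrow> zs @ [q * a])"

definition rot_v :: "nat list \<Rightarrow> nat list" where
  "rot_v v = (case v of [] \<Rightarrow> [] | a # vs \<Rightarrow> vs @ [a + 1])"

type_synonym 'a vertex = "tableau \<times> 'a list \<times> nat list \<times> nat list"

(* vertices of the Yang-Baxter graph G_lambda^{q,s}; lists are indexed 0..N-1 for positions 1..N *)
inductive_set YB_vertices :: "nat list \<Rightarrow> nat \<Rightarrow> 'a::field \<Rightarrow> 'a \<Rightarrow> 'a vertex set"
  for lam :: "nat list" and N :: nat and q :: 'a and s :: 'a where
  root: "(T_lam lam N, map (\<lambda>i. s powi CT lam (T_lam lam N) i) [1..<Suc N],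
          replicate N 0, [1..<Suc N]) \<in> YB_vertices lam N q s"
| step_diff: "\<lbrakk>(T, z, v, \<sigma>) \<in> YB_vertices lam N q s; Suc k < N; v ! k < v ! Suc k\<rbrakk>
     \<Longrightarrow> (T, swapL z k, swapL v k, swapL \<sigma> k) \<in> YB_vertices lam N q s"
| step_eq: "\<lbrakk>(T, z, v, \<sigma>) \<in> YB_vertices lam N q s; Suc k < N; v ! k = v ! Suc k;
     is_RST lam N (swapT T (\<sigma> ! k) (\<sigma> ! Suc k));
     CT lam T (min (\<sigma> ! k) (\<sigma> ! Suc k)) \<ge> CT lam T (max (\<sigma> ! k) (\<sigma> ! Suc k)) + 2\<rbrakk>
     \<Longrightarrow> (swapT T (\<sigma> ! k) (\<sigma> ! Suc k), swapL z k, v, \<sigma>) \<in> YB_vertices lam N q s"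
| affine: "(T, z, v, \<sigma>) \<in> YB_vertices lam N q s
     \<Longrightarrow> (T, rot_q q z, rot_v v, rotate1 \<sigma>) \<in> YB_vertices lam N q s"

end

theory Submission
  imports Defs "HOL-Combinatorics.Transposition"
begin

text \<open>
  Every arrow of the graph transforms a vertex of the form \<open>(T, \<zeta>_{v,T}, v, r_v)\<close>
  into one of the same form. An arrow \<open>s_i\<close> with \<open>v[i] \<noteq> v[i+1]\<close> permutes
  positions, and the rank function is permuted alike because the comparison of \<open>v[i]\<close> and
  \<open>v[i+1]\<close> is strict. An arrow \<open>s_i\<close> with \<open>v[i] = v[i+1]\<close> exchanges the entries
  \<open>r_v[i]\<close> and \<open>r_v[i+1]\<close> of the tableau, hence their contents, which is the same as
  exchanging \<open>\<zeta>[i]\<close> and \<open>\<zeta>[i+1]\<close>. The affine arrow \<open>\<Psi>\<close> rotates positions, and the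
  increment of the moved entry of \<open>v\<close> lets it rank as the last of its equals, matching the
  factor \<open>q\<close>. The root has this form since \<open>r_0\<close> is the identity, so induction on the
  generation of the graph proves the claim; no property of the shape or of the tableaux is needed.
\<close>

definition rank_prec :: "nat list \<Rightarrow> nat \<Rightarrow> nat \<Rightarrow> bool" where
  "rank_prec v j i \<longleftrightarrow> v ! i < v ! j \<or> (v ! j = v ! i \<and> j \<le> i)"

lemma rank_prec_trans: "rank_prec v h j \<Longrightarrow> rank_prec v j i \<Longrightarrow> rank_prec v h i"
  unfolding rank_prec_def by linarith

lemma rank_prec_antisym: "rank_prec v j i \<Longrightarrow> rank_prec v i j \<Longrightarrow> i = j"
  unfolding rank_prec_def by linarith

lemma rank_prec_total: "rank_prec v j i \<or> rank_prec v i j"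
  unfolding rank_prec_def by linarith

lemma length_rank [simp]: "length (rank v) = length v"
  by (simp add: rank_def)

lemma nth_rank_card:
  assumes "i < length v"
  shows "rank v ! i = card {j. j < length v \<and> rank_prec v j i}"
proof -
  let ?A = "{j. j \<le> i \<and> j < length v \<and> v ! j \<ge> v ! i}"
  let ?B = "{j. i < j \<and> j < length v \<and> v ! j > v ! i}"
  have "{j. j < length v \<and> rank_prec v j i} = ?A \<union> ?B"
    by (auto simp: rank_prec_def)
  moreover have "card (?A \<union> ?B) = card ?A + card ?B"
    by (rule card_Un_disjoint) auto
  ultimately show ?thesis
    using assms by (simp add: rank_def)
qed

lemma distinct_rank: "distinct (rank v)"
proof -
  have less: "rank v ! i < rank v ! i'"
    if "i < length v" "i' < length v" "rank_prec v i i'" "i \<noteq> i'" for i i'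
  proof -
    let ?P = "\<lambda>i. {j. j < length v \<and> rank_prec v j i}"
    have "?P i \<subseteq> ?P i'"
      using rank_prec_trans[OF _ that(3)] by blast
    moreover have "i' \<in> ?P i' - ?P i"
      using that rank_prec_antisym[of v i' i] by (auto simp: rank_prec_def)
    ultimately have "card (?P i) < card (?P i')"
      by (intro psubset_card_mono) auto
    then show ?thesis
      using that nth_rank_card by simp
  qed
  have "rank v ! i \<noteq> rank v ! i'" if "i < length v" "i' < length v" "i \<noteq> i'" for i i'
    using less[of i i'] less[of i' i] rank_prec_total[of v i i'] that by fastforce
  then show ?thesis
    by (simp add: distinct_conv_nth)
qed

lemma card_Collect_bij_betw_lessThan:
  assumes "bij_betw g {..<n} {..<n}"
  shows "card {j. j < n \<and> Q (g j)} = card {j. j < n \<and> Q j}"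
proof (rule bij_betw_same_card, rule bij_betw_subset[OF assms])
  show "g ` {j. j < n \<and> Q (g j)} = {j. j < n \<and> Q j}"
    using assms by (force simp: bij_betw_def)
qed auto

lemma rank_reindex:
  assumes g: "bij_betw g {..<length v} {..<length v}" and len: "length w = length v"
    and prec: "\<And>i j. i < length v \<Longrightarrow> j < length v \<Longrightarrow> rank_prec w j i = rank_prec v (g j) (g i)"
    and i: "i < length v"
  shows "rank w ! i = rank v ! g i"
proof -
  have "{j. j < length v \<and> rank_prec w j i} = {j. j < length v \<and> rank_prec v (g j) (g i)}"
    using prec i by auto
  then have "rank w ! i = card {j. j < length v \<and> rank_prec v (g j) (g i)}"
    using nth_rank_card[of i w] i len by simp
  also have "\<dots> = card {j. j < length v \<and> rank_prec v j (g i)}"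
    by (rule card_Collect_bij_betw_lessThan[OF g])
  also have "\<dots> = rank v ! g i"
    using nth_rank_card g i by (metis bij_betwE lessThan_iff)
  finally show ?thesis .
qed

lemma rank_replicate: "rank (replicate n c) = [1..<Suc n]"
proof (rule nth_equalityI)
  fix i assume "i < length (rank (replicate n c))"
  then have i: "i < n" by simp
  have "{j. j < n \<and> rank_prec (replicate n c) j i} = {..i}"
    using i by (auto simp: rank_prec_def)
  then show "rank (replicate n c) ! i = [1..<Suc n] ! i"
    using nth_rank_card[of i "replicate n c"] i by (simp del: upt_Suc)
qed simp

lemma length_swapL [simp]: "length (swapL xs k) = length xs"
  by (simp add: swapL_def)

lemma nth_swapL:
  assumes "Suc k < length xs" "i < length xs"
  shows "swapL xs k ! i = xs ! Transposition.transpose k (Suc k) i"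
  using assms by (auto simp: swapL_def transpose_def nth_list_update)

lemma transpose_Suc_less:
  "Suc k < n \<Longrightarrow> i < n \<Longrightarrow> Transposition.transpose k (Suc k) i < n"
  by (simp add: transpose_def)

lemma rank_swapL:
  assumes k: "Suc k < length v" and ne: "v ! k \<noteq> v ! Suc k"
  shows "rank (swapL v k) = swapL (rank v) k"
proof -
  let ?t = "Transposition.transpose k (Suc k)"
  have prec: "rank_prec (swapL v k) j i = rank_prec v (?t j) (?t i)"
    if "i < length v" "j < length v" for i j
  proof -
    have "v ! ?t j = v ! ?t i \<Longrightarrow> (j \<le> i) = (?t j \<le> ?t i)"
      using ne by (auto simp: transpose_def)
    then show ?thesis
      using k that by (auto simp: rank_prec_def nth_swapL)
  qed
  have "rank (swapL v k) ! i = swapL (rank v) k ! i" if "i < length v" for i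
    using rank_reindex[of ?t v "swapL v k", OF _ _ prec] k that by (simp add: nth_swapL)
  then show ?thesis
    by (intro nth_equalityI) simp_all
qed

lemma length_rot_q [simp]: "length (rot_q q xs) = length xs"
  by (cases xs) (simp_all add: rot_q_def)

lemma length_rot_v [simp]: "length (rot_v v) = length v"
  by (cases v) (simp_all add: rot_v_def)

lemma nth_rot_q:
  "i < length xs \<Longrightarrow> rot_q q xs ! i = (if Suc i = length xs then q * xs ! 0 else xs ! Suc i)"
  by (cases xs) (auto simp: rot_q_def nth_append)

lemma nth_rot_v:
  "i < length v \<Longrightarrow> rot_v v ! i = (if Suc i = length v then v ! 0 + 1 else v ! Suc i)"
  by (cases v) (auto simp: rot_v_def nth_append)

lemma rank_rot_v: "rank (rot_v v) = rotate1 (rank v)"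
proof -
  let ?n = "length v"
  define g where "g j = (if Suc j = ?n then 0 else Suc j)" for j
  have g: "bij_betw g {..<?n} {..<?n}"
    by (rule bij_betw_byWitness[where f' = "\<lambda>j. if j = 0 then ?n - 1 else j - 1"])
      (auto simp: g_def)
  \<comment> \<open>The increment of the moved entry breaks ties exactly as its move from first to last place does.\<close>
  have prec: "rank_prec (rot_v v) j i = rank_prec v (g j) (g i)"
    if "i < ?n" "j < ?n" for i j
    using that by (auto simp: rank_prec_def nth_rot_v g_def)
  have "rank (rot_v v) ! i = rotate1 (rank v) ! i" if "i < ?n" for i
    using rank_reindex[OF g length_rot_v prec that] that by (simp add: nth_rotate1 g_def)
  then show ?thesis
    by (intro nth_equalityI) simp_all
qed

lemma nth_transpose_distinct:
  assumes "distinct xs" "i < length xs" "j < length xs" "k < length xs"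
  shows "xs ! Transposition.transpose j k i = Transposition.transpose (xs ! j) (xs ! k) (xs ! i)"
  using assms by (auto simp: transpose_def nth_eq_iff_index_eq)

lemma CT_swapT: "CT lam (swapT T a b) x = CT lam T (Transposition.transpose a b x)"
proof -
  have "(swapT T a b r c = x) = (T r c = Transposition.transpose a b x)" for r c
    by (auto simp: swapT_def transpose_def)
  then show ?thesis
    by (simp add: CT_def cell_of_def)
qed

text \<open>The vector \<open>\<zeta>_{v,T}\<close> of the paper, with positions counted from 0.\<close>

definition zeta :: "'a::field \<Rightarrow> 'a \<Rightarrow> nat list \<Rightarrow> tableau \<Rightarrow> nat list \<Rightarrow> 'a list" where
  "zeta q s lam T v = map (\<lambda>i. q ^ (v ! i) * s powi CT lam T (rank v ! i)) [0..<length v]"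

lemma length_zeta [simp]: "length (zeta q s lam T v) = length v"
  by (simp add: zeta_def)

lemma nth_zeta: "i < length v \<Longrightarrow> zeta q s lam T v ! i = q ^ (v ! i) * s powi CT lam T (rank v ! i)"
  by (simp add: zeta_def)

lemma zeta_replicate_0:
  "zeta q s lam T (replicate n 0) = map (\<lambda>i. s powi CT lam T i) [1..<Suc n]"
  by (rule nth_equalityI) (simp_all add: nth_zeta rank_replicate del: upt_Suc)

lemma swapL_zeta_neq:
  assumes k: "Suc k < length v" and ne: "v ! k \<noteq> v ! Suc k"
  shows "swapL (zeta q s lam T v) k = zeta q s lam T (swapL v k)"
proof (rule nth_equalityI)
  fix i assume "i < length (swapL (zeta q s lam T v) k)"
  then have i: "i < length v" by simp
  show "swapL (zeta q s lam T v) k ! i = zeta q s lam T (swapL v k) ! i"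
    using k i transpose_Suc_less[OF k i]
    by (simp add: nth_swapL nth_zeta rank_swapL[OF k ne])
qed simp

lemma swapL_zeta_eq:
  assumes k: "Suc k < length v" and eq: "v ! k = v ! Suc k"
  shows "swapL (zeta q s lam T v) k = zeta q s lam (swapT T (rank v ! k) (rank v ! Suc k)) v"
proof (rule nth_equalityI)
  let ?t = "Transposition.transpose k (Suc k)"
  fix i assume "i < length (swapL (zeta q s lam T v) k)"
  then have i: "i < length v" by simp
  have "v ! ?t i = v ! i"
    using eq by (simp add: transpose_def)
  moreover have "rank v ! ?t i = Transposition.transpose (rank v ! k) (rank v ! Suc k) (rank v ! i)"
    using k i by (simp add: nth_transpose_distinct distinct_rank)
  ultimately show "swapL (zeta q s lam T v) k ! i
      = zeta q s lam (swapT T (rank v ! k) (rank v ! Suc k)) v ! i"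
    using k i transpose_Suc_less[OF k i] by (simp add: nth_swapL nth_zeta CT_swapT)
qed simp

lemma rot_q_zeta: "rot_q q (zeta q s lam T v) = zeta q s lam T (rot_v v)"
proof (rule nth_equalityI)
  fix i assume "i < length (rot_q q (zeta q s lam T v))"
  then have i: "i < length v" by simp
  then have "0 < length v" by linarith
  with i show "rot_q q (zeta q s lam T v) ! i = zeta q s lam T (rot_v v) ! i"
    by (auto simp: nth_rot_q nth_rot_v nth_zeta rank_rot_v nth_rotate1)
qed simp

lemma YB_vertices_zeta:
  assumes "(T, z, v, \<sigma>) \<in> YB_vertices lam N q s"
  shows "length v = N \<and> \<sigma> = rank v \<and> z = zeta q s lam T v"
  using assms
proof (induction rule: YB_vertices.induct)
  case root
  then show ?case
    by (simp add: rank_replicate zeta_replicate_0 del: upt_Suc)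
next
  case (step_diff T z v \<sigma> k)
  then show ?case
    by (simp add: rank_swapL swapL_zeta_neq)
next
  case (step_eq T z v \<sigma> k)
  then show ?case
    by (simp add: swapL_zeta_eq)
next
  case (affine T z v \<sigma>)
  then show ?case
    by (simp add: rank_rot_v rot_q_zeta)
qed

theorem mainTheorem20:
  fixes lam :: "nat list" and N :: nat and q s :: "'a::field"
  assumes "is_partition lam N"
    and "(T, z, v, \<sigma>) \<in> YB_vertices lam N q s"
  shows "\<sigma> = rank v \<and>
         (\<forall>i\<in>{1..N}. z ! (i - 1) = q ^ (v ! (i - 1)) * s powi CT lam T (\<sigma> ! (i - 1)))"
  using YB_vertices_zeta[OF assms(2)] by (auto simp: nth_zeta)

end
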